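(* For every simple game $v$ on $n\ge 2$ players and every player $i$ that is not a dictator in $v$, we have $\mathrm{PGI}_i(v)\le\frac12$ and $\mathrm{DP}_i(v)\le\frac12$.
   Context: A simple game on $N=\{1,\dots,n\}$ is a surjective, monotone map $v\colon 2^N\to\{0,1\}$. A coalition $S$ is winning if $v(S)=1$; it is minimal winning if it is winning and all proper subsets are losing. Player $j$ is a null player if $v(S)=v(S\cup\{j\})$ for all $S\subseteq N\setminus\{j\}$; player $i$ is a dictator if $v(\{i\})=1$ and all other players are null players. Public Good index: $\mathrm{PGI}_i(v)=m_i/\sum_{j\in N}m_j$, where $m_j$ is the number of minimal winning coalitions containing $j$. Deegan–Packel index: $\mathrm{DP}_i(v)=d_i/\sum_{j\in N}d_j$, where $d_j=\sum_{S\ni j,\ S\text{ minimal winning}}\frac{1}{|S|}$. *)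

theory Defs
  imports Main Complex_Main
begin

text \<open>Players are N = {1..n}; a game is a map v from subsets of N to {0,1}.
  Values of v outside Pow N are irrelevant.\<close>

definition simple_game :: "nat \<Rightarrow> (nat set \<Rightarrow> nat) \<Rightarrow> bool" where
  "simple_game n v \<longleftrightarrow>
     (\<forall>S \<in> Pow {1..n}. v S \<in> {0, 1}) \<and>
     (\<forall>b \<in> {0, 1}. \<exists>S \<in> Pow {1..n}. v S = b) \<and>
     (\<forall>S T. S \<subseteq> T \<and> T \<subseteq> {1..n} \<longrightarrow> v S \<le> v T)"

definition winning :: "nat \<Rightarrow> (nat set \<Rightarrow> nat) \<Rightarrow> nat set \<Rightarrow> bool" where
  "winning n v S \<longleftrightarrow> S \<subseteq> {1..n} \<and> v S = 1"

definition minimal_winning :: "nat \<Rightarrow> (nat set \<Rightarrow> nat) \<Rightarrow> nat set \<Rightarrow> bool" where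
  "minimal_winning n v S \<longleftrightarrow> winning n v S \<and> (\<forall>T. T \<subset> S \<longrightarrow> \<not> winning n v T)"

definition MW :: "nat \<Rightarrow> (nat set \<Rightarrow> nat) \<Rightarrow> nat set set" where
  "MW n v = {S. minimal_winning n v S}"

definition null_player :: "nat \<Rightarrow> (nat set \<Rightarrow> nat) \<Rightarrow> nat \<Rightarrow> bool" where
  "null_player n v j \<longleftrightarrow> (\<forall>S. S \<subseteq> {1..n} - {j} \<longrightarrow> v S = v (S \<union> {j}))"

definition dictator :: "nat \<Rightarrow> (nat set \<Rightarrow> nat) \<Rightarrow> nat \<Rightarrow> bool" where
  "dictator n v i \<longleftrightarrow> v {i} = 1 \<and> (\<forall>j \<in> {1..n} - {i}. null_player n v j)"

definition mw_count :: "nat \<Rightarrow> (nat set \<Rightarrow> nat) \<Rightarrow> nat \<Rightarrow> nat" where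
  "mw_count n v j = card {S \<in> MW n v. j \<in> S}"

definition PGI :: "nat \<Rightarrow> (nat set \<Rightarrow> nat) \<Rightarrow> nat \<Rightarrow> real" where
  "PGI n v i = real (mw_count n v i) / (\<Sum>j\<in>{1..n}. real (mw_count n v j))"

definition dp_weight :: "nat \<Rightarrow> (nat set \<Rightarrow> nat) \<Rightarrow> nat \<Rightarrow> real" where
  "dp_weight n v j = (\<Sum>S\<in>{S \<in> MW n v. j \<in> S}. 1 / real (card S))"

definition DP :: "nat \<Rightarrow> (nat set \<Rightarrow> nat) \<Rightarrow> nat \<Rightarrow> real" where
  "DP n v i = dp_weight n v i / (\<Sum>j\<in>{1..n}. dp_weight n v j)"

end

theory Submission
  imports Defs
begin

text \<open>Both indices compare the weight of player i with a total obtained by double counting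
  over the family F of minimal winning coalitions: \<open>\<Sum>j. m\<^sub>j = \<Sum>S\<in>F. |S|\<close> and
  \<open>\<Sum>j. d\<^sub>j = |F|\<close>. A coalition containing i contributes at least twice as much to the total
  as to i's weight, except the singleton {i}, which falls short by one. If {i} is minimal winning
  but i is no dictator, some non-null player lies in a minimal winning coalition, which must avoid
  i and contributes at least one to the total but nothing to i's weight, compensating the deficit.\<close>

lemma sum_nonneg_compensated:
  fixes h :: "'a \<Rightarrow> real"
  assumes "finite F"
    and "\<And>S. S \<in> F \<Longrightarrow> S \<noteq> X \<Longrightarrow> h S \<ge> 0"
    and "h X \<ge> -1"
    and "X \<in> F \<Longrightarrow> \<exists>Y\<in>F. Y \<noteq> X \<and> h Y \<ge> 1"
  shows "sum h F \<ge> 0"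
proof (cases "X \<in> F")
  case False
  then show ?thesis using assms(2) by (intro sum_nonneg) auto
next
  case True
  then obtain Y where Y: "Y \<in> F" "Y \<noteq> X" "h Y \<ge> 1" using assms(4) by blast
  have "sum h F = h X + h Y + sum h (F - {X} - {Y})"
    using assms(1) True Y(1,2) by (simp add: sum.remove)
  moreover have "sum h (F - {X} - {Y}) \<ge> 0" using assms(2) by (intro sum_nonneg) auto
  ultimately show ?thesis using Y(3) assms(3) by linarith
qed

lemma sum_sum_containing_eq_sum_card:
  fixes w :: "'a set \<Rightarrow> real"
  assumes "finite F" "finite N" "\<And>S. S \<in> F \<Longrightarrow> S \<subseteq> N"
  shows "(\<Sum>j\<in>N. \<Sum>S\<in>{S\<in>F. j \<in> S}. w S) = (\<Sum>S\<in>F. real (card S) * w S)"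
proof -
  have "(\<Sum>j\<in>N. \<Sum>S\<in>{S\<in>F. j \<in> S}. w S) = (\<Sum>S\<in>F. \<Sum>j\<in>{j\<in>N. j \<in> S}. w S)"
    using assms(1,2) by (rule sum.swap_restrict[symmetric])
  also have "\<dots> = (\<Sum>S\<in>F. real (card S) * w S)"
  proof (rule sum.cong[OF refl])
    fix S assume "S \<in> F"
    then have "{j\<in>N. j \<in> S} = S" using assms(3) by blast
    then show "(\<Sum>j\<in>{j\<in>N. j \<in> S}. w S) = real (card S) * w S" by simp
  qed
  finally show ?thesis .
qed

lemma card_ge_2_if_not_singleton:
  assumes "finite S" "i \<in> S" "S \<noteq> {i}"
  shows "card S \<ge> 2"
proof -
  obtain j where "j \<in> S" "j \<noteq> i" using assms(2,3) by blast
  then have "{i, j} \<subseteq> S" using assms(2) by blast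
  moreover have "card {i, j} = 2" using \<open>j \<noteq> i\<close> by simp
  ultimately show ?thesis using card_mono[OF assms(1)] by metis
qed

locale singleton_compensated =
  fixes F :: "'a set set" and i :: 'a
  assumes finite_family: "finite F"
    and finite_members: "\<And>S. S \<in> F \<Longrightarrow> finite S"
    and nonempty_members: "\<And>S. S \<in> F \<Longrightarrow> S \<noteq> {}"
    and singleton_avoided: "{i} \<in> F \<Longrightarrow> \<exists>T\<in>F. i \<notin> T"
begin

lemma card_ge_1: "S \<in> F \<Longrightarrow> card S \<ge> 1"
  using finite_members[of S] nonempty_members[of S] by (simp add: Suc_le_eq card_gt_0_iff)

lemma card_ge_2: "S \<in> F \<Longrightarrow> i \<in> S \<Longrightarrow> S \<noteq> {i} \<Longrightarrow> card S \<ge> 2"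
  using card_ge_2_if_not_singleton[OF finite_members] .

lemma twice_card_containing_le_sum_card:
  "2 * real (card {S\<in>F. i \<in> S}) \<le> (\<Sum>S\<in>F. real (card S))"
proof -
  have "(\<Sum>S\<in>F. real (card S) - 2 * (if i \<in> S then 1 else 0)) \<ge> 0"
  proof (rule sum_nonneg_compensated[OF finite_family, where X="{i}"])
    fix S assume "S \<in> F" "S \<noteq> {i}"
    then show "real (card S) - 2 * (if i \<in> S then 1 else 0) \<ge> 0"
      using card_ge_1[of S] card_ge_2[of S] by (cases "i \<in> S") simp_all
  next
    assume "{i} \<in> F"
    then obtain T where "T \<in> F" "i \<notin> T" using singleton_avoided by blast
    then show "\<exists>T\<in>F. T \<noteq> {i} \<and> real (card T) - 2 * (if i \<in> T then 1 else 0) \<ge> 1"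
      using card_ge_1[of T] by auto
  qed simp
  moreover have "real (card {S\<in>F. i \<in> S}) = (\<Sum>S\<in>F. if i \<in> S then 1 else 0)"
    using finite_family by (simp add: sum.inter_filter[symmetric])
  ultimately show ?thesis by (simp add: sum_subtractf sum_distrib_left)
qed

lemma twice_sum_inverse_card_le_card:
  "2 * (\<Sum>S\<in>{S\<in>F. i \<in> S}. 1 / real (card S)) \<le> real (card F)"
proof -
  have "(\<Sum>S\<in>F. 1 - 2 * (if i \<in> S then 1 / real (card S) else 0)) \<ge> 0"
  proof (rule sum_nonneg_compensated[OF finite_family, where X="{i}"])
    fix S assume "S \<in> F" "S \<noteq> {i}"
    then show "1 - 2 * (if i \<in> S then 1 / real (card S) else 0) \<ge> 0"
      using card_ge_2[of S] by (cases "i \<in> S") (simp_all add: divide_simps)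
  next
    assume "{i} \<in> F"
    then obtain T where "T \<in> F" "i \<notin> T" using singleton_avoided by blast
    then show "\<exists>T\<in>F. T \<noteq> {i} \<and> 1 - 2 * (if i \<in> T then 1 / real (card T) else 0) \<ge> 1"
      by auto
  qed simp
  moreover have "(\<Sum>S\<in>{S\<in>F. i \<in> S}. 1 / real (card S))
      = (\<Sum>S\<in>F. if i \<in> S then 1 / real (card S) else 0)"
    using finite_family by (simp add: sum.inter_filter)
  ultimately show ?thesis by (simp add: sum_subtractf sum_distrib_left)
qed

end

lemma simple_game_values: "simple_game n v \<Longrightarrow> S \<subseteq> {1..n} \<Longrightarrow> v S = 0 \<or> v S = 1"
  by (auto simp: simple_game_def)

lemma simple_game_mono: "simple_game n v \<Longrightarrow> S \<subseteq> T \<Longrightarrow> T \<subseteq> {1..n} \<Longrightarrow> v S \<le> v T"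
  by (auto simp: simple_game_def)

lemma simple_game_empty_losing:
  assumes "simple_game n v"
  shows "v {} = 0"
proof -
  obtain L where "L \<subseteq> {1..n}" "v L = 0" using assms by (auto simp: simple_game_def)
  then show ?thesis using simple_game_mono[OF assms, of "{}" L] by simp
qed

lemma MW_subset: "S \<in> MW n v \<Longrightarrow> S \<subseteq> {1..n}"
  by (simp add: MW_def minimal_winning_def winning_def)

lemma finite_MW: "finite (MW n v)"
  by (rule finite_subset[of _ "Pow {1..n}"]) (use MW_subset in blast)+

lemma MW_nonempty: "simple_game n v \<Longrightarrow> S \<in> MW n v \<Longrightarrow> S \<noteq> {}"
  using simple_game_empty_losing by (fastforce simp: MW_def minimal_winning_def winning_def)

lemma winning_contains_minimal_winning:
  assumes "winning n v W"
  shows "\<exists>T\<subseteq>W. minimal_winning n v T"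
proof -
  have "W \<subseteq> {1..n}" using assms by (simp add: winning_def)
  then have "finite W" by (rule finite_subset) simp
  then show ?thesis using assms
  proof (induction W rule: finite_psubset_induct)
    case (psubset W)
    show ?case
    proof (cases "minimal_winning n v W")
      case False
      then obtain T where "T \<subset> W" "winning n v T"
        using psubset.prems unfolding minimal_winning_def by blast
      moreover from psubset.IH[OF this] obtain U where "U \<subseteq> T" "minimal_winning n v U"
        by blast
      ultimately show ?thesis by (meson order_trans psubset_imp_subset)
    qed blast
  qed
qed

lemma non_null_player_in_MW:
  assumes game: "simple_game n v" and "j \<in> {1..n}" "\<not> null_player n v j"
  shows "\<exists>T\<in>MW n v. j \<in> T"
proof -
  obtain S where S: "S \<subseteq> {1..n} - {j}" "v S \<noteq> v (S \<union> {j})"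
    using assms(3) by (auto simp: null_player_def)
  have S_sub: "S \<subseteq> {1..n}" and Sj: "S \<union> {j} \<subseteq> {1..n}" using S(1) assms(2) by blast+
  have "v S \<le> v (S \<union> {j})" using simple_game_mono[OF game Un_upper1 Sj] .
  moreover note simple_game_values[OF game S_sub] simple_game_values[OF game Sj]
  ultimately have losing: "v S = 0" and "v (S \<union> {j}) = 1" using S(2) by auto
  then have winning: "winning n v (S \<union> {j})" using Sj by (simp add: winning_def)
  obtain T where T: "T \<subseteq> S \<union> {j}" "minimal_winning n v T"
    using winning_contains_minimal_winning[OF winning] by blast
  have "j \<in> T"
  proof (rule ccontr)
    assume "j \<notin> T"
    then have "T \<subseteq> S" using T(1) by blast
    then have "v T \<le> v S" using simple_game_mono[OF game _ S_sub] by blast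
    then show False using T(2) losing by (simp add: minimal_winning_def winning_def)
  qed
  then show ?thesis using T(2) by (auto simp: MW_def)
qed

lemma singleton_MW_compensated:
  assumes "simple_game n v" "\<not> dictator n v i" "{i} \<in> MW n v"
  shows "\<exists>T\<in>MW n v. i \<notin> T"
proof -
  have "v {i} = 1" using assms(3) by (simp add: MW_def minimal_winning_def winning_def)
  then obtain j where j: "j \<in> {1..n}" "j \<noteq> i" "\<not> null_player n v j"
    using assms(2) unfolding dictator_def by blast
  then obtain T where T: "T \<in> MW n v" "j \<in> T"
    using non_null_player_in_MW[OF assms(1)] by blast
  have "i \<notin> T"
  proof
    assume "i \<in> T"
    then have "{i} \<subset> T" using T(2) j(2) by blast
    then show False using T(1) assms(3) by (auto simp: MW_def minimal_winning_def)
  qed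
  then show ?thesis using T(1) by blast
qed

lemma MW_singleton_compensated:
  assumes "simple_game n v" "\<not> dictator n v i"
  shows "singleton_compensated (MW n v) i"
  using assms finite_MW MW_nonempty singleton_MW_compensated
    finite_subset[OF MW_subset finite_atLeastAtMost]
  by unfold_locales auto

lemma sum_mw_count:
  "(\<Sum>j\<in>{1..n}. real (mw_count n v j)) = (\<Sum>S\<in>MW n v. real (card S))"
  using sum_sum_containing_eq_sum_card[OF finite_MW _ MW_subset, where w="\<lambda>_. 1"]
  by (simp add: mw_count_def)

lemma sum_dp_weight:
  assumes "simple_game n v"
  shows "(\<Sum>j\<in>{1..n}. dp_weight n v j) = real (card (MW n v))"
proof -
  have "(\<Sum>j\<in>{1..n}. dp_weight n v j) = (\<Sum>S\<in>MW n v. real (card S) * (1 / real (card S)))"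
    using sum_sum_containing_eq_sum_card[OF finite_MW _ MW_subset]
    by (simp add: dp_weight_def)
  also have "\<dots> = (\<Sum>S\<in>MW n v. 1)"
  proof (rule sum.cong[OF refl])
    fix S assume "S \<in> MW n v"
    then have "finite S" "S \<noteq> {}"
      using finite_subset[OF MW_subset finite_atLeastAtMost] MW_nonempty[OF assms] by blast+
    then show "real (card S) * (1 / real (card S)) = 1" by simp
  qed
  finally show ?thesis by simp
qed

lemma divide_le_half:
  fixes a d :: real
  assumes "0 \<le> a" "2 * a \<le> d"
  shows "a / d \<le> 1/2"
  using assms by (cases "d = 0") (simp_all add: divide_le_eq)

theorem theorem4:
  fixes n :: nat and v :: "nat set \<Rightarrow> nat" and i :: nat
  assumes "n \<ge> 2"
    and "simple_game n v"
    and "i \<in> {1..n}"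
    and "\<not> dictator n v i"
  shows "PGI n v i \<le> 1/2 \<and> DP n v i \<le> 1/2"
proof -
  interpret singleton_compensated "MW n v" i
    using assms(2,4) by (rule MW_singleton_compensated)
  have "2 * real (mw_count n v i) \<le> (\<Sum>j\<in>{1..n}. real (mw_count n v j))"
    unfolding sum_mw_count using twice_card_containing_le_sum_card by (simp add: mw_count_def)
  then have "PGI n v i \<le> 1/2" unfolding PGI_def by (intro divide_le_half) simp_all
  moreover have "2 * dp_weight n v i \<le> (\<Sum>j\<in>{1..n}. dp_weight n v j)"
    unfolding sum_dp_weight[OF assms(2)] using twice_sum_inverse_card_le_card
    by (simp add: dp_weight_def)
  then have "DP n v i \<le> 1/2"
    unfolding DP_def by (intro divide_le_half) (simp_all add: dp_weight_def sum_nonneg)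
  ultimately show ?thesis ..
qed

end
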